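(* For $\phi\in[-\pi,\pi]$ and $n\in\mathbb{N}$ define $$f_n(z)=\sum_{k=1}^{n}\frac{z^ke^{i(n+1-k)\phi}}{n+1-k}=\frac{ze^{in\phi}}{n}+\frac{z^2e^{i(n-1)\phi}}{n-1}+\dots+\frac{z^{n-1}e^{2i\phi}}{2}+z^ne^{i\phi}.$$ There is an absolute constant $C_0>0$ such that $\|f_n\|_{\mathcal{B}}\ge\frac{\log n}{C_0}$ for all $n\in\mathbb{N}$ and all $\phi$.
   Context: The Bloch space $\mathcal{B}$ consists of holomorphic $f$ on $\mathbb{D}$ with $\|f\|_{\mathcal{B}}=|f(0)|+\sup_{z\in\mathbb{D}}(1-|z|^2)|f'(z)|<\infty$. *)

theory Defs
  imports "HOL-Analysis.Analysis"
begin

text \<open>Bloch norm of a function holomorphic on the unit disc: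
  norm (f 0) + sup over the disc of (1 - |z|^2) |f'(z)|.
  (Used here only for polynomials, for which the supremum is finite.)\<close>
definition bloch_norm :: "(complex \<Rightarrow> complex) \<Rightarrow> real" where
  "bloch_norm f = norm (f 0) + (SUP z\<in>ball 0 1. (1 - (cmod z)\<^sup>2) * cmod (deriv f z))"

definition fn_poly :: "real \<Rightarrow> nat \<Rightarrow> complex \<Rightarrow> complex" where
  "fn_poly \<phi> n z = (\<Sum>k=1..n. z ^ k * exp (\<i> * of_real (real (n + 1 - k) * \<phi>)) / of_nat (n + 1 - k))"

end

theory Submission
  imports Defs "HOL-Analysis.Harmonic_Numbers"
begin

text \<open>On the ray \<open>z = r e^(i\<phi>)\<close> all terms of
  \<open>f\<^sub>n'(z) = \<Sum>\<^sub>k k z^(k-1) e^(i(n+1-k)\<phi>) / (n+1-k)\<close> have the same argument \<open>n\<phi>\<close>,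
  so \<open>|f\<^sub>n'(z)| = \<Sum>\<^sub>k k r^(k-1) / (n+1-k)\<close>. At \<open>r = 1 - 1/n\<close> the weight \<open>1 - r\<^sup>2\<close> is at
  least \<open>1/n\<close> and \<open>r^(k-1) \<ge> r^n \<ge> e^(-2)\<close>, while \<open>\<Sum>\<^sub>k k/(n+1-k) = (n+1) H\<^sub>n - n\<close>.
  Hence \<open>(1 - r\<^sup>2) |f\<^sub>n'(z)| \<ge> e^(-2) (H\<^sub>n - 1) \<ge> e^(-2) log n / 3\<close>.\<close>

lemma weighted_deriv_le_bloch_norm:
  assumes "continuous_on (cball 0 1) (deriv f)" "z \<in> ball 0 1"
  shows "(1 - (cmod z)\<^sup>2) * cmod (deriv f z) \<le> bloch_norm f"
proof -
  obtain B where B: "\<And>w. w \<in> cball 0 1 \<Longrightarrow> cmod (deriv f w) \<le> B"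
    using compact_continuous_image[OF assms(1) compact_cball]
    by (metis compact_imp_bounded bounded_iff image_eqI)
  have "bdd_above ((\<lambda>w. (1 - (cmod w)\<^sup>2) * cmod (deriv f w)) ` ball 0 1)"
  proof (rule bdd_aboveI2)
    fix w :: complex assume "w \<in> ball 0 1"
    then have "(1 - (cmod w)\<^sup>2) * cmod (deriv f w) \<le> 1 * B"
      using B by (intro mult_mono) auto
    then show "(1 - (cmod w)\<^sup>2) * cmod (deriv f w) \<le> B" by simp
  qed
  then have "(1 - (cmod z)\<^sup>2) * cmod (deriv f z) \<le> (SUP w\<in>ball 0 1. (1 - (cmod w)\<^sup>2) * cmod (deriv f w))"
    using assms(2) by (rule cSUP_upper2) simp
  then show ?thesis
    unfolding bloch_norm_def by (smt (verit) norm_ge_zero)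
qed

lemma fn_poly_has_field_derivative:
  "(fn_poly \<phi> n has_field_derivative
     (\<Sum>k=1..n. of_nat k * z ^ (k - 1) * exp (\<i> * of_real (real (n + 1 - k) * \<phi>)) / of_nat (n + 1 - k))) (at z)"
  unfolding fn_poly_def [abs_def]
  by (intro DERIV_sum DERIV_cdivide DERIV_cmult_right DERIV_power[OF DERIV_ident, THEN DERIV_cong]) auto

lemma continuous_on_deriv_fn_poly: "continuous_on S (deriv (fn_poly \<phi> n))"
  unfolding DERIV_imp_deriv[OF fn_poly_has_field_derivative, abs_def]
  by (intro continuous_intros) (auto simp del: of_nat_diff)

lemma norm_deriv_fn_poly_on_ray:
  assumes "r \<ge> 0"
  shows "cmod (deriv (fn_poly \<phi> n) (of_real r * exp (\<i> * of_real \<phi>)))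
           = (\<Sum>k=1..n. real k * r ^ (k - 1) / real (n + 1 - k))"
proof -
  have term_eq: "of_nat k * (of_real r * exp (\<i> * of_real \<phi>)) ^ (k - 1)
                   * exp (\<i> * of_real (real (n + 1 - k) * \<phi>)) / of_nat (n + 1 - k)
                 = exp (\<i> * of_real (real n * \<phi>)) * of_real (real k * r ^ (k - 1) / real (n + 1 - k))"
    if "k \<in> {1..n}" for k
  proof -
    have "exp (\<i> * of_real \<phi>) ^ (k - 1) * exp (\<i> * of_real (real (n + 1 - k) * \<phi>))
            = exp (of_nat (k - 1) * (\<i> * of_real \<phi>) + \<i> * of_real (real (n + 1 - k) * \<phi>))"
      by (simp add: exp_add exp_of_nat_mult)
    also have "of_nat (k - 1) * (\<i> * of_real \<phi>) + \<i> * of_real (real (n + 1 - k) * \<phi>) = \<i> * of_real (real n * \<phi>)"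
      using that by (simp add: of_nat_diff algebra_simps)
    finally have "exp (\<i> * of_real \<phi>) ^ (k - 1) * exp (\<i> * of_real (real (n + 1 - k) * \<phi>))
                    = exp (\<i> * of_real (real n * \<phi>))" .
    then show ?thesis
      by (simp add: power_mult_distrib field_simps)
  qed
  have "deriv (fn_poly \<phi> n) (of_real r * exp (\<i> * of_real \<phi>))
          = exp (\<i> * of_real (real n * \<phi>)) * of_real (\<Sum>k=1..n. real k * r ^ (k - 1) / real (n + 1 - k))"
    unfolding DERIV_imp_deriv[OF fn_poly_has_field_derivative] of_real_sum sum_distrib_left
    by (rule sum.cong) (simp_all only: term_eq)
  moreover have "(\<Sum>k=1..n. real k * r ^ (k - 1) / real (n + 1 - k)) \<ge> 0"
    using assms by (intro sum_nonneg) auto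
  ultimately show ?thesis
    by (simp only: norm_mult norm_exp_i_times norm_of_real abs_of_nonneg mult_1)
qed

lemma bloch_norm_fn_poly_ge_radial_sum:
  assumes "0 \<le> r" "r < 1"
  shows "(1 - r\<^sup>2) * (\<Sum>k=1..n. real k * r ^ (k - 1) / real (n + 1 - k)) \<le> bloch_norm (fn_poly \<phi> n)"
proof -
  define z where "z = of_real r * exp (\<i> * of_real \<phi>)"
  have "cmod z = r"
    using assms by (simp add: z_def norm_mult)
  then have "(1 - r\<^sup>2) * cmod (deriv (fn_poly \<phi> n) z) \<le> bloch_norm (fn_poly \<phi> n)"
    using assms weighted_deriv_le_bloch_norm[OF continuous_on_deriv_fn_poly, of z] by simp
  then show ?thesis
    unfolding z_def norm_deriv_fn_poly_on_ray[OF assms(1)] .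
qed

lemma sum_of_nat_div_reflected:
  "(\<Sum>k=1..n. real k / real (n + 1 - k)) = real (n + 1) * harm n - real n"
proof -
  have harm_rev: "harm n = (\<Sum>k=1..n. 1 / real (n + 1 - k))"
    unfolding harm_def using sum.atLeastAtMost_rev[of "\<lambda>k. inverse (real k)" 1 n]
    by (simp add: inverse_eq_divide add.commute)
  have "(\<Sum>k=1..n. real k / real (n + 1 - k)) = (\<Sum>k=1..n. real (n + 1) * (1 / real (n + 1 - k)) - 1)"
    by (rule sum.cong) (auto simp: of_nat_diff field_simps)
  also have "\<dots> = real (n + 1) * harm n - real n"
    by (simp only: sum_subtractf harm_rev sum_distrib_left [symmetric]) simp
  finally show ?thesis .
qed

lemma exp_minus_two_mult_le_one_minus:
  fixes x :: real
  assumes "0 \<le> x" "x \<le> 1/2"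
  shows "exp (-2 * x) \<le> 1 - x"
proof -
  have "x * (2 * x) \<le> x * 1"
    using assms by (intro mult_left_mono) auto
  then have "-2 * x \<le> - x - 2 * x\<^sup>2"
    by (simp add: power2_eq_square)
  also have "\<dots> \<le> ln (1 - x)"
    by (rule ln_one_minus_pos_lower_bound[OF assms])
  finally show ?thesis
    using assms by (simp add: ln_ge_iff)
qed

lemma one_minus_inverse_power_ge:
  assumes "n \<ge> 2"
  shows "exp (-2) \<le> (1 - 1 / real n) ^ n"
proof -
  have "exp (-2) = exp (-2 * (1 / real n)) ^ n"
    using assms by (simp flip: exp_of_nat_mult)
  also have "\<dots> \<le> (1 - 1 / real n) ^ n"
    using assms by (intro power_mono exp_minus_two_mult_le_one_minus) auto
  finally show ?thesis .
qed

lemma ln_div_three_le_harm_minus_one: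
  assumes "n \<ge> 2"
  shows "ln (real n) / 3 \<le> harm n - 1"
proof -
  have "(3/2::real) = harm 2" by (simp add: harm_expand)
  also have "\<dots> \<le> harm n" using assms by (rule harm_mono)
  finally have "3/2 \<le> (harm n :: real)" .
  moreover have "ln (real n) \<le> ln (real n + 1)"
    using assms by simp
  ultimately show ?thesis
    using ln_le_harm[of n] by linarith
qed

lemma weighted_radial_sum_ge_ln:
  assumes "n \<ge> 2"
  defines "r \<equiv> 1 - 1 / real n"
  shows "ln (real n) / (3 * exp 2) \<le> (1 - r\<^sup>2) * (\<Sum>k=1..n. real k * r ^ (k - 1) / real (n + 1 - k))"
proof -
  have r: "0 \<le> r" "r \<le> 1" and weight: "1 / real n \<le> 1 - r\<^sup>2"
    using assms by (auto simp: r_def power2_eq_square field_simps)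
  have harm_ge: "ln (real n) / 3 \<le> harm n - 1"
    using assms(1) by (rule ln_div_three_le_harm_minus_one)
  have ln_nonneg: "0 \<le> ln (real n)"
    using assms(1) by simp
  have "r ^ n * (real (n + 1) * harm n - real n) = (\<Sum>k=1..n. real k * r ^ n / real (n + 1 - k))"
    unfolding sum_of_nat_div_reflected [symmetric] sum_distrib_left by (simp add: ac_simps)
  also have "\<dots> \<le> (\<Sum>k=1..n. real k * r ^ (k - 1) / real (n + 1 - k))"
    using r by (intro sum_mono divide_right_mono mult_left_mono power_decreasing) auto
  finally have sum_ge: "r ^ n * (real (n + 1) * harm n - real n) \<le> \<dots>" .
  have "ln (real n) / (3 * exp 2) = exp (-2) * (ln (real n) / 3)"
    by (simp add: exp_minus field_simps)
  also have "\<dots> \<le> r ^ n * (harm n - 1)"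
    using one_minus_inverse_power_ge[OF assms(1), folded r_def] harm_ge ln_nonneg r
    by (intro mult_mono) auto
  also have "\<dots> \<le> 1 / real n * (r ^ n * (real (n + 1) * harm n - real n))"
    using assms(1) mult_nonneg_nonneg[OF harm_nonneg zero_le_power[OF r(1)], of n n]
    by (simp add: field_simps)
  also have "\<dots> \<le> 1 / real n * (\<Sum>k=1..n. real k * r ^ (k - 1) / real (n + 1 - k))"
    using sum_ge by (intro mult_left_mono) auto
  also have "\<dots> \<le> (1 - r\<^sup>2) * (\<Sum>k=1..n. real k * r ^ (k - 1) / real (n + 1 - k))"
    using weight r by (intro mult_right_mono sum_nonneg) auto
  finally show ?thesis .
qed

theorem mainTheorem8:
  shows "\<exists>C0::real. C0 > 0 \<and> (\<forall>n::nat. n \<ge> 1 \<longrightarrow> (\<forall>\<phi>::real. \<phi> \<in> {-pi..pi} \<longrightarrow>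
           bloch_norm (fn_poly \<phi> n) \<ge> ln (real n) / C0))"
proof (intro exI[of _ "3 * exp 2"] conjI allI impI)
  fix n :: nat and \<phi> :: real
  assume "n \<ge> 1"
  show "ln (real n) / (3 * exp 2) \<le> bloch_norm (fn_poly \<phi> n)"
  proof (cases "n = 1")
    case True
    then show ?thesis
      using bloch_norm_fn_poly_ge_radial_sum[of 0 n \<phi>] by simp
  next
    case False
    with \<open>n \<ge> 1\<close> have "n \<ge> 2" by simp
    then show ?thesis
      using weighted_radial_sum_ge_ln[of n] bloch_norm_fn_poly_ge_radial_sum[of "1 - 1 / real n" n \<phi>] by simp
  qed
qed simp

end
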